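(* Let $\alpha\in(0,2]$, $c>0$, $a>0$. The centered Gaussian process $\{G^{\alpha,c,a}(s):s\in[0,\infty)\}$ with covariance $\mathrm{Cov}(G^{\alpha,c,a}(s),G^{\alpha,c,a}(r))=\frac12\big(f^{\alpha,c,a}(s)+f^{\alpha,c,a}(r)-f^{\alpha,c,a}(|s-r|)\big)$ has stationary increments (with $\mathrm{Var}(G^{\alpha,c,a}(s)-G^{\alpha,c,a}(r))=f^{\alpha,c,a}(|s-r|)$), and its increments over disjoint intervals are negatively correlated: for all $s,r,u\ge0$, $$\mathrm{Cov}\big(G^{\alpha,c,a}(s)-G^{\alpha,c,a}(0),\,G^{\alpha,c,a}(r+s+u)-G^{\alpha,c,a}(s+u)\big)\le0.$$
   Context: Define $f^{\alpha,c,a}(0)=0$ and for $s>0$, $f^{\alpha,c,a}(s)=\frac{4s}{a\pi}\int_0^\infty\frac{\sin^2(u/2)}{u^2}(1-e^{-2c(u/s)^\alpha})\,\mathrm{d}u$. *)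

theory Defs
  imports "HOL-Probability.Probability"
begin

text \<open>The function f^{alpha,c,a}; the integral over [0,oo) is the (absolutely convergent)
  Henstock-Kurzweil/Lebesgue integral; the integrand's value at u = 0 is irrelevant.\<close>
definition f_fun :: "real \<Rightarrow> real \<Rightarrow> real \<Rightarrow> real \<Rightarrow> real" where
  "f_fun \<alpha> c a s = (if s = 0 then 0 else
     4 * s / (a * pi) * integral {0..} (\<lambda>u. (sin (u / 2))\<^sup>2 / u\<^sup>2 *
        (1 - exp (- 2 * c * (u / s) powr \<alpha>))))"

definition G_cov :: "real \<Rightarrow> real \<Rightarrow> real \<Rightarrow> real \<Rightarrow> real \<Rightarrow> real" where
  "G_cov \<alpha> c a s r = (f_fun \<alpha> c a s + f_fun \<alpha> c a r - f_fun \<alpha> c a \<bar>s - r\<bar>) / 2"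

definition covar :: "'a measure \<Rightarrow> ('a \<Rightarrow> real) \<Rightarrow> ('a \<Rightarrow> real) \<Rightarrow> real" where
  "covar M X Y = integral\<^sup>L M (\<lambda>x. (X x - integral\<^sup>L M X) * (Y x - integral\<^sup>L M Y))"

definition centered_gaussian_process :: "'a measure \<Rightarrow> (real \<Rightarrow> 'a \<Rightarrow> real) \<Rightarrow> bool" where
  "centered_gaussian_process M G \<longleftrightarrow>
     (\<forall>s\<ge>0. G s \<in> borel_measurable M \<and> integrable M (\<lambda>x. (G s x)\<^sup>2) \<and> integral\<^sup>L M (G s) = 0) \<and>
     (\<forall>T w. finite T \<and> T \<subseteq> {0..} \<longrightarrow>
        (AE x in M. (\<Sum>t\<in>T. w t * G t x) = 0) \<or>
        (\<exists>\<sigma>>0. distributed M lborel (\<lambda>x. \<Sum>t\<in>T. w t * G t x) (\<lambda>y. ennreal (normal_density 0 \<sigma> y))))"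

end

theory Submission
  imports Defs
begin

text \<open>
  Expanding bilinearly, the covariance of the increments G p - G q and G p' - G q' is
  (f|p - q'| + f|q - p'| - f|p - p'| - f|q - q'|) / 2. The first two claims are immediate from
  this, and the third becomes f(r + s + u) + f(u) <= f(r + u) + f(s + u): the increments of f
  decrease. Up to a positive factor, f(s) = s * int_0^oo k(u) (1 - phi(u / s)) du with
  k(u) = sin(u/2)^2 / u^2 and phi(v) = exp(-2 c v^alpha). Since
  int_0^oo k(u) (1 - cos(b u)) du = (pi / 4) min(1, |b|), this transform equals
  (pi / 4) E min(s, |S|) whenever phi is the characteristic function of a random variable S,
  and s |-> min(s, |S|) has decreasing increments. For alpha = 2, phi is a Gaussian
  characteristic function. For alpha < 2, phi is the pointwise limit of the n-th powers of the
  characteristic function of a symmetric Pareto law with tail index alpha and scale of order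
  n^(-1/alpha), and dominated convergence carries the inequality to the limit.
\<close>

section \<open>The integral of sin(x)^2 / x^2\<close>

lemma sin_sq_div_sq_antiderivative_deriv:
  fixes x :: real
  assumes "0 < x"
  shows "((\<lambda>x. Si (2 * x) - sin x * (sin x / x)) has_real_derivative (sin x)\<^sup>2 / x\<^sup>2) (at x)"
  using assms
  apply (auto intro!: derivative_eq_intros DERIV_Si[THEN DERIV_chain2] simp: power2_eq_square)
  apply (simp add: field_simps power2_eq_square)
  apply (metis sin_double mult.commute)
  done

lemma sin_sq_div_sq_antiderivative_at_right_0:
  "((\<lambda>x::real. Si (2 * x) - sin x * (sin x / x)) \<longlongrightarrow> 0) (at_right 0)"
proof -
  have Si_cont: "continuous_on UNIV Si"
    using isCont_Si continuous_at_imp_continuous_on by blast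
  have "continuous_on UNIV (\<lambda>x. Si (2 * x) - sin x * sinc x)"
    by (intro continuous_intros continuous_on_compose2[OF Si_cont]) auto
  then have "isCont (\<lambda>x. Si (2 * x) - sin x * sinc x) 0"
    by (simp add: continuous_on_eq_continuous_at)
  then have "((\<lambda>x. Si (2 * x) - sin x * sinc x) \<longlongrightarrow> Si (2 * 0) - sin 0 * sinc 0) (at_right 0)"
    unfolding isCont_def by (rule tendsto_mono[OF at_le, rotated]) auto
  moreover have "Si (2 * 0) - sin 0 * sinc 0 = 0"
    by (simp add: Si_def zero_ereal_def)
  ultimately have "((\<lambda>x. Si (2 * x) - sin x * sinc x) \<longlongrightarrow> 0) (at_right 0)"
    by (simp only:)
  then show ?thesis
    by (rule Lim_transform_eventually, intro eventually_at_rightI[of 0 1]) auto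
qed

lemma sin_sq_div_sq_antiderivative_at_top:
  "((\<lambda>x::real. Si (2 * x) - sin x * (sin x / x)) \<longlongrightarrow> pi / 2) at_top"
proof -
  have Si_lim: "((\<lambda>x. Si (2 * x)) \<longlongrightarrow> pi / 2) at_top"
    by (rule filterlim_compose[OF Si_at_top])
      (intro filterlim_tendsto_pos_mult_at_top tendsto_const filterlim_ident, auto)
  have sin_sq_lim: "((\<lambda>x::real. sin x * (sin x / x)) \<longlongrightarrow> 0) at_top"
  proof (rule Lim_null_comparison)
    show "\<forall>\<^sub>F x in at_top. norm (sin x * (sin x / x)) \<le> 1 / x"
      using eventually_gt_at_top[of 0]
    proof eventually_elim
      case (elim x)
      have "\<bar>sin x\<bar> * \<bar>sin x\<bar> \<le> 1"
        by (rule mult_le_one) (auto simp: abs_sin_le_one)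
      then show ?case
        using elim by (simp add: abs_mult divide_simps)
    qed
    show "((\<lambda>x::real. 1 / x) \<longlongrightarrow> 0) at_top"
      by real_asymp
  qed
  show ?thesis
    using tendsto_diff[OF Si_lim sin_sq_lim] by simp
qed

lemma has_bochner_integral_sin_sq_div_sq:
  "has_bochner_integral lborel (\<lambda>x::real. indicator {0<..} x * ((sin x)\<^sup>2 / x\<^sup>2)) (pi / 2)"
proof -
  define F :: "real \<Rightarrow> real" where "F = (\<lambda>x. Si (2 * x) - sin x * (sin x / x))"
  have "((F \<circ> real_of_ereal) \<longlongrightarrow> 0) (at_right (ereal 0))"
    using sin_sq_div_sq_antiderivative_at_right_0 by (simp add: F_def ereal_tendsto_simps)
  moreover have "((F \<circ> real_of_ereal) \<longlongrightarrow> pi / 2) (at_left \<infinity>)"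
    using sin_sq_div_sq_antiderivative_at_top by (simp add: F_def ereal_tendsto_simps)
  ultimately have FTC: "set_integrable lborel (einterval 0 \<infinity>) (\<lambda>x::real. (sin x)\<^sup>2 / x\<^sup>2)"
    "(LBINT x=0..\<infinity>. (sin x)\<^sup>2 / x\<^sup>2) = pi / 2"
    using interval_integral_FTC_nonneg[of 0 \<infinity> F "\<lambda>x. (sin x)\<^sup>2 / x\<^sup>2" 0 "pi / 2"]
      sin_sq_div_sq_antiderivative_deriv
    by (auto simp: zero_ereal_def F_def)
  have "set_integrable lborel {0<..} (\<lambda>x::real. (sin x)\<^sup>2 / x\<^sup>2)"
    using FTC(1) by (simp add: einterval_def zero_ereal_def greaterThan_def)
  moreover have "(LINT x:{0<..}|lborel. (sin x)\<^sup>2 / x\<^sup>2) = pi / 2"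
    using FTC(2) by (simp add: interval_lebesgue_integral_0_infty)
  ultimately show ?thesis
    by (simp add: set_integrable_def set_lebesgue_integral_def has_bochner_integral_iff)
qed

lemma has_bochner_integral_sin_sq_scaled_div_sq:
  fixes b :: real
  assumes "0 \<le> b"
  shows "has_bochner_integral lborel (\<lambda>x. indicator {0<..} x * ((sin (b * x))\<^sup>2 / x\<^sup>2)) (b * pi / 2)"
proof (cases "b = 0")
  case True
  then show ?thesis
    by (simp add: has_bochner_integral_zero)
next
  case False
  with assms have b: "0 < b" by simp
  define f where "f x = indicator {0<..} x * ((sin x)\<^sup>2 / x\<^sup>2)" for x :: real
  have f: "integrable lborel f" "integral\<^sup>L lborel f = pi / 2"
    using has_bochner_integral_sin_sq_div_sq unfolding f_def has_bochner_integral_iff by auto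
  have scaled: "(\<lambda>x. indicator {0<..} x * ((sin (b * x))\<^sup>2 / x\<^sup>2)) = (\<lambda>x. (b * b) * f (0 + b * x))"
    using b by (auto simp: fun_eq_iff f_def indicator_def zero_less_mult_iff power2_eq_square
        field_simps)
  have "integrable lborel (\<lambda>x. f (0 + b * x))"
    using lborel_integrable_real_affine[OF f(1), of b 0] b by simp
  moreover have "integral\<^sup>L lborel f = b * (\<integral>x. f (0 + b * x) \<partial>lborel)"
    using lborel_integral_real_affine[of b f 0] b by simp
  ultimately show ?thesis
    unfolding scaled using f(2) b by (simp add: has_bochner_integral_iff field_simps)
qed

section \<open>A transform with the Fejer kernel\<close>

lemma four_sin_sq_mult_sin_sq:
  fixes x y :: real
  shows "4 * (sin x)\<^sup>2 * (sin y)\<^sup>2 = 2 * (sin x)\<^sup>2 + 2 * (sin y)\<^sup>2 - (sin (x + y))\<^sup>2 - (sin (x - y))\<^sup>2"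
proof -
  have "(cos x)\<^sup>2 = 1 - (sin x)\<^sup>2" "(cos y)\<^sup>2 = 1 - (sin y)\<^sup>2"
    by (simp_all add: cos_squared_eq)
  then show ?thesis
    unfolding sin_add sin_diff power2_eq_square by algebra
qed

lemma sin_sq_mult_one_minus_cos:
  fixes u c :: real
  shows "(sin (u / 2))\<^sup>2 * (1 - cos (c * u)) = (2 * (sin (1 / 2 * u))\<^sup>2 + 2 * (sin (c / 2 * u))\<^sup>2
    - (sin ((1 + c) / 2 * u))\<^sup>2 - (sin (\<bar>1 - c\<bar> / 2 * u))\<^sup>2) / 2"
proof -
  have "(sin \<bar>y\<bar>)\<^sup>2 = (sin y)\<^sup>2" for y :: real
    by (cases "0 \<le> y") auto
  moreover have "\<bar>1 - c\<bar> / 2 * u = \<bar>u / 2 - c / 2 * u\<bar> \<or> \<bar>1 - c\<bar> / 2 * u = - \<bar>u / 2 - c / 2 * u\<bar>"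
    by (cases "0 \<le> u") (auto simp: abs_if field_simps)
  ultimately have "(sin (\<bar>1 - c\<bar> / 2 * u))\<^sup>2 = (sin (u / 2 - c / 2 * u))\<^sup>2"
    by (metis power2_minus sin_minus)
  moreover have "1 - cos (c * u) = 2 * (sin (c / 2 * u))\<^sup>2"
    using cos_double_sin[of "c / 2 * u"] by simp
  moreover have "(1 + c) / 2 * u = u / 2 + c / 2 * u" "1 / 2 * u = u / 2"
    by (simp_all add: field_simps)
  ultimately show ?thesis
    using four_sin_sq_mult_sin_sq[of "u / 2" "c / 2 * u"] by (simp only:) simp
qed

text \<open>This is pi/2 times the Fejer kernel of the real line, cut off to the half-line u > 0.\<close>

definition fejer_kernel :: "real \<Rightarrow> real" where
  "fejer_kernel u = indicator {0<..} u * ((sin (u / 2))\<^sup>2 / u\<^sup>2)"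

lemma fejer_kernel_nonneg: "0 \<le> fejer_kernel u"
  by (simp add: fejer_kernel_def)

lemma fejer_kernel_measurable [measurable]: "fejer_kernel \<in> borel_measurable borel"
  unfolding fejer_kernel_def by measurable

lemma integrable_fejer_kernel: "integrable lborel fejer_kernel"
proof -
  have "fejer_kernel = (\<lambda>x. indicator {0<..} x * ((sin (1 / 2 * x))\<^sup>2 / x\<^sup>2))"
    by (auto simp: fejer_kernel_def fun_eq_iff)
  then show ?thesis
    using has_bochner_integral_sin_sq_scaled_div_sq[of "1 / 2"] by (simp add: has_bochner_integral_iff)
qed

lemma has_bochner_integral_fejer_kernel_one_minus_cos:
  "has_bochner_integral lborel (\<lambda>u. fejer_kernel u * (1 - cos (b * u))) (pi / 4 * min 1 \<bar>b\<bar>)"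
proof -
  define c where "c = \<bar>b\<bar>"
  define S where "S \<beta> x = indicator {0<..} x * ((sin (\<beta> * x))\<^sup>2 / x\<^sup>2)" for \<beta> x :: real
  have S: "has_bochner_integral lborel (S \<beta>) (\<beta> * pi / 2)" if "0 \<le> \<beta>" for \<beta>
    using has_bochner_integral_sin_sq_scaled_div_sq[OF that] unfolding S_def by simp
  have pointwise: "fejer_kernel u * (1 - cos (b * u)) =
      (2 * S (1 / 2) u + 2 * S (c / 2) u - S ((1 + c) / 2) u - S (\<bar>1 - c\<bar> / 2) u) / 2" for u
  proof (cases "0 < u")
    case True
    then have "cos (b * u) = cos (c * u)"
      by (metis abs_mult abs_of_pos c_def cos_abs_real)
    then have "fejer_kernel u * (1 - cos (b * u)) = (sin (u / 2))\<^sup>2 * (1 - cos (c * u)) / u\<^sup>2"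
      using True by (simp add: fejer_kernel_def)
    then show ?thesis
      unfolding sin_sq_mult_one_minus_cos S_def using True
      by (simp add: add_divide_distrib diff_divide_distrib)
  qed (simp add: fejer_kernel_def S_def)
  have "has_bochner_integral lborel
      (\<lambda>u. (2 * S (1 / 2) u + 2 * S (c / 2) u - S ((1 + c) / 2) u - S (\<bar>1 - c\<bar> / 2) u) / 2)
      ((2 * (1 / 2 * pi / 2) + 2 * (c / 2 * pi / 2) - ((1 + c) / 2 * pi / 2) - (\<bar>1 - c\<bar> / 2 * pi / 2)) / 2)"
    by (intro has_bochner_integral_divide_zero has_bochner_integral_diff has_bochner_integral_add
        has_bochner_integral_mult_right S) (auto simp: c_def)
  moreover have "(2 * (1 / 2 * pi / 2) + 2 * (c / 2 * pi / 2) - ((1 + c) / 2 * pi / 2)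
      - (\<bar>1 - c\<bar> / 2 * pi / 2)) / 2 = pi / 4 * min 1 c"
    by (cases "c \<le> 1") (auto simp: field_simps min_def)
  ultimately show ?thesis
    unfolding pointwise c_def[symmetric] by (simp only:)
qed

definition fejer_transform :: "(real \<Rightarrow> real) \<Rightarrow> real \<Rightarrow> real" where
  "fejer_transform \<phi> s = s * (\<integral>u. fejer_kernel u * (1 - \<phi> (u / s)) \<partial>lborel)"

lemma fejer_transform_cong:
  assumes "\<And>v. 0 \<le> v \<Longrightarrow> \<phi> v = \<psi> v" and "0 \<le> s"
  shows "fejer_transform \<phi> s = fejer_transform \<psi> s"
proof -
  have "fejer_kernel u * (1 - \<phi> (u / s)) = fejer_kernel u * (1 - \<psi> (u / s))" for u
    using assms by (cases "0 < u") (auto simp: fejer_kernel_def)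
  then show ?thesis
    unfolding fejer_transform_def by (simp only:)
qed

lemma has_bochner_integral_fejer_kernel_one_minus_cos_div:
  assumes "0 < s"
  shows "has_bochner_integral lborel (\<lambda>u. fejer_kernel u * (1 - cos (u / s * x))) (pi / 4 * (min s \<bar>x\<bar> / s))"
proof -
  have "min 1 \<bar>x / s\<bar> = min s \<bar>x\<bar> / s"
    using assms by (auto simp: min_def abs_divide field_simps)
  moreover have "(\<lambda>u. fejer_kernel u * (1 - cos (u / s * x))) = (\<lambda>u. fejer_kernel u * (1 - cos ((x / s) * u)))"
    by (auto simp: fun_eq_iff mult.commute)
  ultimately show ?thesis
    using has_bochner_integral_fejer_kernel_one_minus_cos[of "x / s"] by simp
qed

lemma fejer_transform_cos_expectation:
  assumes "prob_space P" and [measurable]: "S \<in> borel_measurable P" and "0 \<le> s"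
  shows "fejer_transform (\<lambda>v. \<integral>\<omega>. cos (v * S \<omega>) \<partial>P) s = pi / 4 * (\<integral>\<omega>. min s \<bar>S \<omega>\<bar> \<partial>P)"
proof (cases "s = 0")
  case True
  then show ?thesis by (simp add: fejer_transform_def)
next
  case False
  with \<open>0 \<le> s\<close> have s: "0 < s" by simp
  interpret P: prob_space P by fact
  interpret pair_sigma_finite P lborel
    by (simp add: pair_sigma_finite_def P.sigma_finite_measure_axioms lborel.sigma_finite_measure_axioms)
  define g where "g \<omega> u = fejer_kernel u * (1 - cos (u / s * S \<omega>))" for \<omega> u
  have g_measurable [measurable]: "(\<lambda>(\<omega>, u). g \<omega> u) \<in> borel_measurable (P \<Otimes>\<^sub>M lborel)"
    unfolding g_def by measurable
  have g_nonneg: "0 \<le> g \<omega> u" for \<omega> u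
    unfolding g_def by (intro mult_nonneg_nonneg fejer_kernel_nonneg) auto
  have g_integral: "has_bochner_integral lborel (g \<omega>) (pi / 4 * (min s \<bar>S \<omega>\<bar> / s))" for \<omega>
    unfolding g_def by (rule has_bochner_integral_fejer_kernel_one_minus_cos_div[OF s])
  have "integrable (P \<Otimes>\<^sub>M lborel) (\<lambda>(\<omega>, u). g \<omega> u)"
  proof (rule Fubini_integrable)
    have "(\<lambda>\<omega>. \<integral>u. norm (g \<omega> u) \<partial>lborel) = (\<lambda>\<omega>. pi / 4 * (min s \<bar>S \<omega>\<bar> / s))"
      using g_integral g_nonneg by (auto simp: fun_eq_iff has_bochner_integral_iff)
    moreover have "pi / 4 * (min s \<bar>S \<omega>\<bar> / s) \<le> pi / 4" for \<omega>
      using s by (intro mult_left_le) auto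
    ultimately show "integrable P (\<lambda>\<omega>. \<integral>u. norm (case (\<omega>, u) of (\<omega>, u) \<Rightarrow> g \<omega> u) \<partial>lborel)"
      using s by (auto intro!: P.integrable_const_bound[where B = "pi / 4"])
    show "AE \<omega> in P. integrable lborel (\<lambda>u. case (\<omega>, u) of (\<omega>, u) \<Rightarrow> g \<omega> u)"
      using g_integral by (auto simp: has_bochner_integral_iff)
  qed simp
  then have "(\<integral>u. (\<integral>\<omega>. g \<omega> u \<partial>P) \<partial>lborel) = (\<integral>\<omega>. (\<integral>u. g \<omega> u \<partial>lborel) \<partial>P)"
    using Fubini_integral[of "\<lambda>\<omega> u. g \<omega> u"] by simp
  moreover have "(\<integral>\<omega>. g \<omega> u \<partial>P) = fejer_kernel u * (1 - (\<integral>\<omega>. cos (u / s * S \<omega>) \<partial>P))" for u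
  proof -
    have "integrable P (\<lambda>\<omega>. cos (u / s * S \<omega>))"
      by (rule P.integrable_const_bound[where B = 1]) auto
    then show ?thesis
      unfolding g_def by (simp add: P.prob_space)
  qed
  moreover have "(\<integral>\<omega>. (\<integral>u. g \<omega> u \<partial>lborel) \<partial>P) = pi / 4 * (\<integral>\<omega>. min s \<bar>S \<omega>\<bar> \<partial>P) / s"
    using g_integral by (simp add: has_bochner_integral_iff)
  ultimately show ?thesis
    unfolding fejer_transform_def using s by simp
qed

lemma fejer_transform_tendsto:
  assumes bounded: "\<And>n v. \<bar>\<phi>s n v\<bar> \<le> 1"
    and lim: "\<And>v. 0 \<le> v \<Longrightarrow> (\<lambda>n. \<phi>s n v) \<longlonglongrightarrow> \<phi> v"
    and [measurable]: "\<And>n. \<phi>s n \<in> borel_measurable borel" "\<phi> \<in> borel_measurable borel"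
    and "0 \<le> s"
  shows "(\<lambda>n. fejer_transform (\<phi>s n) s) \<longlonglongrightarrow> fejer_transform \<phi> s"
proof (cases "s = 0")
  case True
  then show ?thesis by (simp add: fejer_transform_def)
next
  case False
  with \<open>0 \<le> s\<close> have s: "0 < s" by simp
  have "(\<lambda>n. \<integral>u. fejer_kernel u * (1 - \<phi>s n (u / s)) \<partial>lborel)
      \<longlonglongrightarrow> (\<integral>u. fejer_kernel u * (1 - \<phi> (u / s)) \<partial>lborel)"
  proof (rule integral_dominated_convergence[where w = "\<lambda>u. 2 * fejer_kernel u"])
    show "integrable lborel (\<lambda>u. 2 * fejer_kernel u)"
      using integrable_fejer_kernel by simp
    show "AE u in lborel. (\<lambda>n. fejer_kernel u * (1 - \<phi>s n (u / s))) \<longlonglongrightarrow> fejer_kernel u * (1 - \<phi> (u / s))"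
    proof (rule AE_I2)
      fix u :: real
      show "(\<lambda>n. fejer_kernel u * (1 - \<phi>s n (u / s))) \<longlonglongrightarrow> fejer_kernel u * (1 - \<phi> (u / s))"
      proof (cases "0 < u")
        case True
        then show ?thesis
          using s by (intro tendsto_intros lim) simp
      qed (simp add: fejer_kernel_def)
    qed
    show "AE u in lborel. norm (fejer_kernel u * (1 - \<phi>s n (u / s))) \<le> 2 * fejer_kernel u" for n
    proof (rule AE_I2)
      fix u :: real
      have "fejer_kernel u * \<bar>1 - \<phi>s n (u / s)\<bar> \<le> fejer_kernel u * 2"
        using bounded[of n "u / s"] by (intro mult_left_mono fejer_kernel_nonneg) linarith
      then show "norm (fejer_kernel u * (1 - \<phi>s n (u / s))) \<le> 2 * fejer_kernel u"
        using fejer_kernel_nonneg[of u] by (simp add: abs_mult)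
    qed
  qed measurable
  then show ?thesis
    unfolding fejer_transform_def by (intro tendsto_intros)
qed

section \<open>Functions with decreasing increments\<close>

definition decreasing_increments :: "(real \<Rightarrow> real) \<Rightarrow> bool" where
  "decreasing_increments g \<longleftrightarrow>
     (\<forall>r s u. 0 \<le> r \<longrightarrow> 0 \<le> s \<longrightarrow> 0 \<le> u \<longrightarrow> g (r + s + u) + g u \<le> g (r + u) + g (s + u))"

lemma decreasing_incrementsI:
  assumes "\<And>r s u. 0 \<le> r \<Longrightarrow> 0 \<le> s \<Longrightarrow> 0 \<le> u \<Longrightarrow> g (r + s + u) + g u \<le> g (r + u) + g (s + u)"
  shows "decreasing_increments g"
  using assms unfolding decreasing_increments_def by blast

lemma decreasing_incrementsD:
  assumes "decreasing_increments g" and "0 \<le> r" "0 \<le> s" "0 \<le> u"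
  shows "g (r + s + u) + g u \<le> g (r + u) + g (s + u)"
  using assms unfolding decreasing_increments_def by blast

lemma decreasing_increments_cong:
  assumes "\<And>s. 0 \<le> s \<Longrightarrow> g s = h s" and "decreasing_increments g"
  shows "decreasing_increments h"
proof (rule decreasing_incrementsI)
  fix r s u :: real
  assume "0 \<le> r" "0 \<le> s" "0 \<le> u"
  then show "h (r + s + u) + h u \<le> h (r + u) + h (s + u)"
    using decreasing_incrementsD[OF assms(2)] by (simp flip: assms(1))
qed

lemma decreasing_increments_cmult:
  assumes "0 \<le> c" and "decreasing_increments g"
  shows "decreasing_increments (\<lambda>s. c * g s)"
proof (rule decreasing_incrementsI)
  fix r s u :: real
  assume "0 \<le> r" "0 \<le> s" "0 \<le> u"
  then have "c * (g (r + s + u) + g u) \<le> c * (g (r + u) + g (s + u))"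
    using assms by (intro mult_left_mono decreasing_incrementsD)
  then show "c * g (r + s + u) + c * g u \<le> c * g (r + u) + c * g (s + u)"
    by (simp add: distrib_left)
qed

lemma decreasing_increments_min: "decreasing_increments (\<lambda>s. min s x)"
  by (rule decreasing_incrementsI) (auto simp: min_def)

lemma decreasing_increments_integral:
  assumes "\<And>s. 0 \<le> s \<Longrightarrow> integrable M (g s)"
    and "\<And>\<omega>. \<omega> \<in> space M \<Longrightarrow> decreasing_increments (\<lambda>s. g s \<omega>)"
  shows "decreasing_increments (\<lambda>s. \<integral>\<omega>. g s \<omega> \<partial>M)"
proof (rule decreasing_incrementsI)
  fix r s u :: real
  assume nonneg: "0 \<le> r" "0 \<le> s" "0 \<le> u"
  have "(\<integral>\<omega>. g (r + s + u) \<omega> \<partial>M) + (\<integral>\<omega>. g u \<omega> \<partial>M) = (\<integral>\<omega>. g (r + s + u) \<omega> + g u \<omega> \<partial>M)"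
    using nonneg assms(1) by (simp add: Bochner_Integration.integral_add)
  also have "\<dots> \<le> (\<integral>\<omega>. g (r + u) \<omega> + g (s + u) \<omega> \<partial>M)"
    using nonneg assms by (intro integral_mono Bochner_Integration.integrable_add decreasing_incrementsD) auto
  also have "\<dots> = (\<integral>\<omega>. g (r + u) \<omega> \<partial>M) + (\<integral>\<omega>. g (s + u) \<omega> \<partial>M)"
    using nonneg assms(1) by (simp add: Bochner_Integration.integral_add)
  finally show "(\<integral>\<omega>. g (r + s + u) \<omega> \<partial>M) + (\<integral>\<omega>. g u \<omega> \<partial>M)
      \<le> (\<integral>\<omega>. g (r + u) \<omega> \<partial>M) + (\<integral>\<omega>. g (s + u) \<omega> \<partial>M)" .
qed

lemma decreasing_increments_LIMSEQ:
  assumes "\<And>n. decreasing_increments (g n)" and "\<And>s. 0 \<le> s \<Longrightarrow> (\<lambda>n. g n s) \<longlonglongrightarrow> h s"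
  shows "decreasing_increments h"
proof (rule decreasing_incrementsI)
  fix r s u :: real
  assume nonneg: "0 \<le> r" "0 \<le> s" "0 \<le> u"
  show "h (r + s + u) + h u \<le> h (r + u) + h (s + u)"
  proof (rule LIMSEQ_le)
    show "(\<lambda>n. g n (r + s + u) + g n u) \<longlonglongrightarrow> h (r + s + u) + h u"
      using nonneg by (intro tendsto_add assms(2)) simp_all
    show "(\<lambda>n. g n (r + u) + g n (s + u)) \<longlonglongrightarrow> h (r + u) + h (s + u)"
      using nonneg by (intro tendsto_add assms(2)) simp_all
    show "\<exists>N. \<forall>n\<ge>N. g n (r + s + u) + g n u \<le> g n (r + u) + g n (s + u)"
      using nonneg by (blast intro: decreasing_incrementsD[OF assms(1)])
  qed
qed

lemma decreasing_increments_fejer_transform_cos_expectation: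
  assumes "prob_space P" and "S \<in> borel_measurable P"
  shows "decreasing_increments (fejer_transform (\<lambda>v. \<integral>\<omega>. cos (v * S \<omega>) \<partial>P))"
proof -
  interpret prob_space P by fact
  have "decreasing_increments (\<lambda>s. \<integral>\<omega>. min s \<bar>S \<omega>\<bar> \<partial>P)"
  proof (rule decreasing_increments_integral[OF _ decreasing_increments_min])
    show "integrable P (\<lambda>\<omega>. min s \<bar>S \<omega>\<bar>)" if "0 \<le> s" for s
      using that assms(2) by (intro integrable_const_bound[where B = s] AE_I2) auto
  qed
  then have "decreasing_increments (\<lambda>s. pi / 4 * (\<integral>\<omega>. min s \<bar>S \<omega>\<bar> \<partial>P))"
    by (intro decreasing_increments_cmult) simp_all
  then show ?thesis
    by (rule decreasing_increments_cong[rotated])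
      (simp add: fejer_transform_cos_expectation[OF assms])
qed

lemma decreasing_increments_fejer_transform_LIMSEQ:
  assumes "\<And>n. decreasing_increments (fejer_transform (\<phi>s n))"
    and "\<And>n v. \<bar>\<phi>s n v\<bar> \<le> 1"
    and "\<And>v. 0 \<le> v \<Longrightarrow> (\<lambda>n. \<phi>s n v) \<longlonglongrightarrow> \<phi> v"
    and "\<And>n. \<phi>s n \<in> borel_measurable borel" "\<phi> \<in> borel_measurable borel"
  shows "decreasing_increments (fejer_transform \<phi>)"
  by (rule decreasing_increments_LIMSEQ[OF assms(1) fejer_transform_tendsto[OF assms(2-5)]])

section \<open>Symmetric Pareto distributions\<close>

lemma has_bochner_integral_reflect:
  fixes f :: "real \<Rightarrow> real"
  assumes "has_bochner_integral lborel f I"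
  shows "has_bochner_integral lborel (\<lambda>x. f (- x)) I"
proof -
  have f: "integrable lborel f" "integral\<^sup>L lborel f = I"
    using assms by (auto simp: has_bochner_integral_iff)
  have "integrable lborel (\<lambda>x. f (0 + -1 * x))"
    by (rule lborel_integrable_real_affine[OF f(1)]) simp
  moreover have "integral\<^sup>L lborel f = \<bar>-1\<bar> *\<^sub>R (\<integral>x. f (0 + -1 * x) \<partial>lborel)"
    by (rule lborel_integral_real_affine) simp
  ultimately show ?thesis
    using f(2) by (simp add: has_bochner_integral_iff)
qed

lemma lborel_integral_odd_eq_0:
  fixes f :: "real \<Rightarrow> real"
  assumes "\<And>x. f (- x) = - f x"
  shows "(\<integral>x. f x \<partial>lborel) = 0"
proof -
  have "(\<integral>x. f x \<partial>lborel) = \<bar>-1\<bar> *\<^sub>R (\<integral>x. f (0 + -1 * x) \<partial>lborel)"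
    by (rule lborel_integral_real_affine) simp
  then show ?thesis
    using assms by simp
qed

lemma has_bochner_integral_even:
  fixes f :: "real \<Rightarrow> real"
  assumes "has_bochner_integral lborel (\<lambda>x. indicator {0<..} x * f x) I"
    and "\<And>x. f (- x) = f x" and "f 0 = 0"
  shows "has_bochner_integral lborel f (2 * I)"
proof -
  have "(\<lambda>x. indicator {0<..} x * f x + indicator {0<..} (- x) * f (- x)) = f"
  proof
    fix x :: real
    show "indicator {0<..} x * f x + indicator {0<..} (- x) * f (- x) = f x"
      using assms(2)[of x] assms(3) by (cases x "0::real" rule: linorder_cases) simp_all
  qed
  moreover have "has_bochner_integral lborel
      (\<lambda>x. indicator {0<..} x * f x + indicator {0<..} (- x) * f (- x)) (I + I)"
    using has_bochner_integral_add[OF assms(1) has_bochner_integral_reflect[OF assms(1)]] by simp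
  ultimately show ?thesis
    by (simp only: mult_2)
qed

lemma has_bochner_integral_indicator_of_has_integral:
  fixes f :: "real \<Rightarrow> real"
  assumes "(f has_integral I) S" and "\<And>x. x \<in> S \<Longrightarrow> 0 \<le> f x" and "S \<in> sets borel"
    and [measurable]: "f \<in> borel_measurable borel"
  shows "has_bochner_integral lborel (\<lambda>x. indicator S x * f x) I"
proof -
  have "integral\<^sup>N lborel (\<lambda>x. indicator S x * f x) = I"
    using nn_integral_has_integral_lebesgue[OF assms(2,1)] by simp
  moreover have "0 \<le> I"
    using has_integral_nonneg[OF assms(1)] assms(2) by auto
  ultimately show ?thesis
    using assms(2,3) by (intro has_bochner_integral_nn_integral) (auto simp: indicator_def)
qed

lemma has_bochner_integral_powr_tail:
  fixes \<alpha> \<epsilon> :: real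
  assumes "0 < \<alpha>" "0 < \<epsilon>"
  shows "has_bochner_integral lborel (\<lambda>x. indicator {\<epsilon>..} x * x powr (-1 - \<alpha>)) (\<epsilon> powr (- \<alpha>) / \<alpha>)"
proof -
  have "((\<lambda>x. x powr (-1 - \<alpha>)) has_integral - (\<epsilon> powr (-1 - \<alpha> + 1)) / (-1 - \<alpha> + 1)) {\<epsilon>..}"
    using assms by (intro has_integral_powr_to_inf) auto
  then show ?thesis
    by (intro has_bochner_integral_indicator_of_has_integral) auto
qed

lemma one_minus_cos_le:
  fixes x :: real
  shows "1 - cos x \<le> x\<^sup>2 / 2"
proof -
  have "1 - cos x = 2 * (sin (x / 2))\<^sup>2"
    using cos_double_sin[of "x / 2"] by simp
  also have "(sin (x / 2))\<^sup>2 \<le> (x / 2)\<^sup>2"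
    using abs_sin_x_le_abs_x[of "x / 2"] by (metis abs_ge_zero power2_abs power_mono)
  finally show ?thesis
    by (simp add: power_divide)
qed

text \<open>The Levy measure |x|^(-1-alpha) dx of the symmetric alpha-stable law, tested against 1 - cos x.\<close>

definition levy_integrand :: "real \<Rightarrow> real \<Rightarrow> real" where
  "levy_integrand \<alpha> x = (1 - cos x) * \<bar>x\<bar> powr (-1 - \<alpha>)"

lemma levy_integrand_measurable [measurable]: "levy_integrand \<alpha> \<in> borel_measurable borel"
  unfolding levy_integrand_def by measurable

lemma levy_integrand_nonneg: "0 \<le> levy_integrand \<alpha> x"
  by (simp add: levy_integrand_def)

lemma levy_integrand_le:
  assumes "0 < x"
  shows "levy_integrand \<alpha> x \<le> (if x \<le> 1 then x powr (1 - \<alpha>) / 2 else 2 * x powr (-1 - \<alpha>))"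
proof -
  have levy_x: "levy_integrand \<alpha> x = (1 - cos x) * x powr (-1 - \<alpha>)"
    using assms by (simp add: levy_integrand_def)
  have "levy_integrand \<alpha> x \<le> x\<^sup>2 / 2 * x powr (-1 - \<alpha>)"
    unfolding levy_x by (intro mult_right_mono one_minus_cos_le) auto
  also have "\<dots> = x powr (1 - \<alpha>) / 2"
    using assms by (simp add: powr_add[symmetric] flip: powr_numeral)
  finally have "levy_integrand \<alpha> x \<le> x powr (1 - \<alpha>) / 2" .
  moreover have "levy_integrand \<alpha> x \<le> 2 * x powr (-1 - \<alpha>)"
    unfolding levy_x by (intro mult_right_mono) (auto simp: cos_ge_minus_one)
  ultimately show ?thesis
    by simp
qed

lemma integrable_levy_integrand:
  assumes "0 < \<alpha>" "\<alpha> < 2"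
  shows "integrable lborel (levy_integrand \<alpha>)"
proof -
  define h where "h x = indicator {0..1} x * (x powr (1 - \<alpha>) / 2) + indicator {1..} x * (2 * x powr (-1 - \<alpha>))"
    for x :: real
  have "has_bochner_integral lborel (\<lambda>x. indicator {0..1} x * x powr (1 - \<alpha>)) (1 powr (1 - \<alpha> + 1) / (1 - \<alpha> + 1))"
    using assms by (intro has_bochner_integral_indicator_of_has_integral has_integral_powr_from_0) auto
  moreover have "has_bochner_integral lborel (\<lambda>x. indicator {1..} x * x powr (-1 - \<alpha>)) (1 powr (- \<alpha>) / \<alpha>)"
    using assms by (intro has_bochner_integral_powr_tail) auto
  ultimately have "integrable lborel (\<lambda>x. indicator {0..1} x * x powr (1 - \<alpha>) / 2
      + 2 * (indicator {1..} x * x powr (-1 - \<alpha>)))"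
    by (intro Bochner_Integration.integrable_add integrable_divide integrable_mult_right)
      (auto simp: has_bochner_integral_iff)
  then have h_integrable: "integrable lborel h"
    unfolding h_def by (simp add: algebra_simps)
  have dominated: "norm (indicator {0<..} x * levy_integrand \<alpha> x) \<le> norm (h x)" for x :: real
  proof (cases "0 < x")
    case True
    then have "levy_integrand \<alpha> x \<le> h x"
      using levy_integrand_le[OF True, of \<alpha>] True by (auto simp: h_def split: split_indicator if_splits)
    then show ?thesis
      using True levy_integrand_nonneg[of \<alpha> x] by (simp add: h_def)
  qed (simp add: h_def)
  have "integrable lborel (\<lambda>x. indicator {0<..} x * levy_integrand \<alpha> x)"
    by (rule Bochner_Integration.integrable_bound[OF h_integrable _ AE_I2[OF dominated]]) measurable
  then have "has_bochner_integral lborel (levy_integrand \<alpha>) (2 * (\<integral>x. indicator {0<..} x * levy_integrand \<alpha> x \<partial>lborel))"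
    by (intro has_bochner_integral_even) (simp_all add: has_bochner_integral_iff levy_integrand_def)
  then show ?thesis
    by (simp add: has_bochner_integral_iff)
qed

lemma integral_levy_integrand_pos:
  assumes "0 < \<alpha>" "\<alpha> < 2"
  shows "0 < (\<integral>x. levy_integrand \<alpha> x \<partial>lborel)"
proof -
  define m where "m = (1 - cos 1) * 2 powr (-1 - \<alpha>)"
  have "cos (1::real) < cos 0"
    by (rule cos_monotone_0_pi) (use pi_ge_two in auto)
  then have cos_1: "cos (1::real) < 1"
    by simp
  have "indicator {1..2} x * m \<le> levy_integrand \<alpha> x" for x :: real
  proof (cases "x \<in> {1..2}")
    case True
    have "cos x \<le> cos 1"
      using True pi_ge_two by (intro cos_monotone_0_pi_le) auto
    moreover have "2 powr (-1 - \<alpha>) \<le> \<bar>x\<bar> powr (-1 - \<alpha>)"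
      using True assms by (intro powr_mono2') auto
    ultimately show ?thesis
      using True cos_1 by (auto simp: m_def levy_integrand_def intro!: mult_mono)
  qed (simp add: levy_integrand_nonneg)
  then have "(\<integral>x. indicator {1..2::real} x * m \<partial>lborel) \<le> (\<integral>x. levy_integrand \<alpha> x \<partial>lborel)"
    using integrable_levy_integrand[OF assms] by (intro integral_mono) auto
  moreover have "0 < m"
    using cos_1 by (simp add: m_def)
  ultimately show ?thesis
    by simp
qed

lemma levy_integrand_scaled:
  assumes "0 < \<alpha>" "\<alpha> < 2" and "0 < v"
  shows "integrable lborel (\<lambda>x. (1 - cos (v * x)) * \<bar>x\<bar> powr (-1 - \<alpha>))"
    and "(\<integral>x. (1 - cos (v * x)) * \<bar>x\<bar> powr (-1 - \<alpha>) \<partial>lborel) = v powr \<alpha> * (\<integral>x. levy_integrand \<alpha> x \<partial>lborel)"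
proof -
  have scaled: "(\<lambda>x. (1 - cos (v * x)) * \<bar>x\<bar> powr (-1 - \<alpha>)) = (\<lambda>x. v powr (1 + \<alpha>) * levy_integrand \<alpha> (0 + v * x))"
  proof
    fix x :: real
    have "v powr (1 + \<alpha>) * \<bar>v * x\<bar> powr (-1 - \<alpha>) = (v powr (1 + \<alpha>) * v powr (-1 - \<alpha>)) * \<bar>x\<bar> powr (-1 - \<alpha>)"
      using \<open>0 < v\<close> by (simp add: abs_mult powr_mult)
    also have "v powr (1 + \<alpha>) * v powr (-1 - \<alpha>) = 1"
      using \<open>0 < v\<close> by (simp flip: powr_add)
    finally show "(1 - cos (v * x)) * \<bar>x\<bar> powr (-1 - \<alpha>) = v powr (1 + \<alpha>) * levy_integrand \<alpha> (0 + v * x)"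
      by (simp add: levy_integrand_def)
  qed
  have "integrable lborel (\<lambda>x. levy_integrand \<alpha> (0 + v * x))"
    using lborel_integrable_real_affine[OF integrable_levy_integrand[OF assms(1,2)], of v 0] \<open>0 < v\<close> by simp
  then show "integrable lborel (\<lambda>x. (1 - cos (v * x)) * \<bar>x\<bar> powr (-1 - \<alpha>))"
    unfolding scaled by simp
  have "(\<integral>x. levy_integrand \<alpha> x \<partial>lborel) = v * (\<integral>x. levy_integrand \<alpha> (0 + v * x) \<partial>lborel)"
    using lborel_integral_real_affine[of v "levy_integrand \<alpha>" 0] \<open>0 < v\<close> by simp
  moreover have "v powr (1 + \<alpha>) = v * v powr \<alpha>"
    using \<open>0 < v\<close> by (simp add: powr_add)
  ultimately show "(\<integral>x. (1 - cos (v * x)) * \<bar>x\<bar> powr (-1 - \<alpha>) \<partial>lborel) = v powr \<alpha> * (\<integral>x. levy_integrand \<alpha> x \<partial>lborel)"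
    unfolding scaled by simp
qed

definition sym_pareto_density :: "real \<Rightarrow> real \<Rightarrow> real \<Rightarrow> real" where
  "sym_pareto_density \<alpha> \<epsilon> x = \<alpha> / 2 * \<epsilon> powr \<alpha> * (\<bar>x\<bar> powr (-1 - \<alpha>) * indicator {\<epsilon>..} \<bar>x\<bar>)"

definition sym_pareto :: "real \<Rightarrow> real \<Rightarrow> real measure" where
  "sym_pareto \<alpha> \<epsilon> = density lborel (\<lambda>x. ennreal (sym_pareto_density \<alpha> \<epsilon> x))"

lemma sym_pareto_density_measurable [measurable]: "sym_pareto_density \<alpha> \<epsilon> \<in> borel_measurable borel"
  unfolding sym_pareto_density_def by measurable

lemma sym_pareto_density_nonneg: "0 < \<alpha> \<Longrightarrow> 0 \<le> sym_pareto_density \<alpha> \<epsilon> x"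
  by (simp add: sym_pareto_density_def)

lemma has_bochner_integral_sym_pareto_density:
  assumes "0 < \<alpha>" "0 < \<epsilon>"
  shows "has_bochner_integral lborel (sym_pareto_density \<alpha> \<epsilon>) 1"
proof -
  have "has_bochner_integral lborel (\<lambda>x. \<alpha> / 2 * \<epsilon> powr \<alpha> * (indicator {\<epsilon>..} x * x powr (-1 - \<alpha>)))
      (\<alpha> / 2 * \<epsilon> powr \<alpha> * (\<epsilon> powr (- \<alpha>) / \<alpha>))"
    using assms by (intro has_bochner_integral_mult_right has_bochner_integral_powr_tail)
  moreover have "(\<lambda>x. \<alpha> / 2 * \<epsilon> powr \<alpha> * (indicator {\<epsilon>..} x * x powr (-1 - \<alpha>)))
      = (\<lambda>x. indicator {0<..} x * sym_pareto_density \<alpha> \<epsilon> x)"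
    using assms by (auto simp: fun_eq_iff sym_pareto_density_def indicator_def)
  moreover have "\<alpha> / 2 * \<epsilon> powr \<alpha> * (\<epsilon> powr (- \<alpha>) / \<alpha>) = 1 / 2"
    using assms by (simp add: powr_minus field_simps)
  ultimately have "has_bochner_integral lborel (sym_pareto_density \<alpha> \<epsilon>) (2 * (1 / 2))"
    using assms by (intro has_bochner_integral_even) (simp_all add: sym_pareto_density_def)
  then show ?thesis
    by simp
qed

lemma sets_sym_pareto [simp, measurable_cong]: "sets (sym_pareto \<alpha> \<epsilon>) = sets borel"
  by (simp add: sym_pareto_def)

lemma real_distribution_sym_pareto:
  assumes "0 < \<alpha>" "0 < \<epsilon>"
  shows "real_distribution (sym_pareto \<alpha> \<epsilon>)"
proof -
  have "emeasure (sym_pareto \<alpha> \<epsilon>) (space (sym_pareto \<alpha> \<epsilon>)) = (\<integral>\<^sup>+ x. ennreal (sym_pareto_density \<alpha> \<epsilon> x) \<partial>lborel)"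
    by (simp add: sym_pareto_def emeasure_density)
  also have "\<dots> = 1"
    using has_bochner_integral_sym_pareto_density[OF assms] sym_pareto_density_nonneg[OF assms(1)]
    by (subst nn_integral_eq_integral) (auto simp: has_bochner_integral_iff)
  finally have "prob_space (sym_pareto \<alpha> \<epsilon>)"
    by (rule prob_spaceI)
  then show ?thesis
    by (simp add: real_distribution_def real_distribution_axioms_def)
qed

lemma integral_sym_pareto:
  assumes "0 < \<alpha>" and [measurable]: "f \<in> borel_measurable borel"
  shows "(\<integral>x. f x \<partial>sym_pareto \<alpha> \<epsilon>) = (\<integral>x. sym_pareto_density \<alpha> \<epsilon> x * f x \<partial>lborel)"
  unfolding sym_pareto_def using sym_pareto_density_nonneg[OF assms(1)] by (subst integral_density) auto

lemma char_sym_pareto: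
  assumes "0 < \<alpha>" "0 < \<epsilon>"
  shows "char (sym_pareto \<alpha> \<epsilon>) v = complex_of_real (\<integral>x. cos (v * x) \<partial>sym_pareto \<alpha> \<epsilon>)"
proof -
  interpret real_distribution "sym_pareto \<alpha> \<epsilon>"
    by (rule real_distribution_sym_pareto[OF assms])
  have "integrable (sym_pareto \<alpha> \<epsilon>) (\<lambda>x. iexp (v * x))"
    by (rule integrable_iexp) auto
  then have "Re (char (sym_pareto \<alpha> \<epsilon>) v) = (\<integral>x. Re (iexp (v * x)) \<partial>sym_pareto \<alpha> \<epsilon>)"
    and "Im (char (sym_pareto \<alpha> \<epsilon>) v) = (\<integral>x. Im (iexp (v * x)) \<partial>sym_pareto \<alpha> \<epsilon>)"
    by (simp_all add: char_def)
  moreover have "(\<integral>x. sin (v * x) \<partial>sym_pareto \<alpha> \<epsilon>) = (\<integral>x. sym_pareto_density \<alpha> \<epsilon> x * sin (v * x) \<partial>lborel)"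
    by (rule integral_sym_pareto[OF assms(1)]) simp
  moreover have "(\<integral>x. sym_pareto_density \<alpha> \<epsilon> x * sin (v * x) \<partial>lborel) = 0"
    by (rule lborel_integral_odd_eq_0) (simp add: sym_pareto_density_def)
  ultimately show ?thesis
    by (simp add: complex_eq_iff Re_exp Im_exp)
qed

lemma one_minus_integral_cos_sym_pareto:
  assumes "0 < \<alpha>" "0 < \<epsilon>"
  shows "1 - (\<integral>x. cos (v * x) \<partial>sym_pareto \<alpha> \<epsilon>)
    = \<alpha> / 2 * \<epsilon> powr \<alpha> * (\<integral>x. (1 - cos (v * x)) * \<bar>x\<bar> powr (-1 - \<alpha>) * indicator {\<epsilon>..} \<bar>x\<bar> \<partial>lborel)"
proof -
  interpret real_distribution "sym_pareto \<alpha> \<epsilon>"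
    by (rule real_distribution_sym_pareto[OF assms])
  have "1 - (\<integral>x. cos (v * x) \<partial>sym_pareto \<alpha> \<epsilon>) = (\<integral>x. 1 - cos (v * x) \<partial>sym_pareto \<alpha> \<epsilon>)"
    using prob_space by (subst Bochner_Integration.integral_diff) (auto intro: integrable_const_bound[where B = 1])
  also have "\<dots> = (\<integral>x. sym_pareto_density \<alpha> \<epsilon> x * (1 - cos (v * x)) \<partial>lborel)"
    using assms(1) by (rule integral_sym_pareto) simp
  also have "\<dots> = (\<integral>x. \<alpha> / 2 * \<epsilon> powr \<alpha> * ((1 - cos (v * x)) * \<bar>x\<bar> powr (-1 - \<alpha>) * indicator {\<epsilon>..} \<bar>x\<bar>) \<partial>lborel)"
    by (simp add: sym_pareto_density_def mult_ac)
  finally show ?thesis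
    by simp
qed

lemma measurable_integral_cos_sym_pareto [measurable]:
  assumes "0 < \<alpha>"
  shows "(\<lambda>v. \<integral>x. cos (v * x) \<partial>sym_pareto \<alpha> \<epsilon>) \<in> borel_measurable borel"
proof -
  have "(\<lambda>v. \<integral>x. cos (v * x) \<partial>sym_pareto \<alpha> \<epsilon>) = (\<lambda>v. \<integral>x. sym_pareto_density \<alpha> \<epsilon> x * cos (v * x) \<partial>lborel)"
    by (intro ext integral_sym_pareto[OF assms]) simp
  then show ?thesis
    by (simp only:) measurable
qed

lemma (in real_distribution) abs_integral_cos_le_1: "\<bar>\<integral>x. cos (v * x) \<partial>M\<bar> \<le> 1"
proof -
  have "integrable M (\<lambda>x. cos (v * x))"
    by (rule integrable_const_bound[where B = 1]) auto
  then have "(\<integral>x. cos (v * x) \<partial>M) \<le> 1" and "-1 \<le> (\<integral>x. cos (v * x) \<partial>M)"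
    by (intro integral_le_const integral_ge_const AE_I2; simp)+
  then show ?thesis
    by linarith
qed

lemma (in real_distribution) integral_cos_sum_iid:
  assumes "char M v = complex_of_real (\<integral>x. cos (v * x) \<partial>M)"
  shows "(\<integral>\<omega>. cos (v * (\<Sum>i<N. \<omega> i)) \<partial>(PiM {..<N} (\<lambda>_. M))) = (\<integral>x. cos (v * x) \<partial>M) ^ N"
proof -
  interpret product_sigma_finite "\<lambda>_::nat. M"
    by (simp add: product_sigma_finite_def sigma_finite_measure_axioms)
  have "cos (v * (\<Sum>i<N. \<omega> i)) = Re (\<Prod>i<N. iexp (v * \<omega> i))" for \<omega> :: "nat \<Rightarrow> real"
  proof -
    have "(\<Prod>i<N. iexp (v * \<omega> i)) = exp (\<Sum>i<N. \<i> * complex_of_real (v * \<omega> i))"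
      by (simp add: exp_sum)
    also have "(\<Sum>i<N. \<i> * complex_of_real (v * \<omega> i)) = \<i> * complex_of_real (v * (\<Sum>i<N. \<omega> i))"
      by (simp add: sum_distrib_left)
    finally show ?thesis
      by (simp add: Re_exp)
  qed
  moreover have "integrable (PiM {..<N} (\<lambda>_. M)) (\<lambda>\<omega>. \<Prod>i<N. iexp (v * \<omega> i))"
    by (rule product_integrable_prod) (auto intro: integrable_iexp)
  moreover have "(\<integral>\<omega>. (\<Prod>i<N. iexp (v * \<omega> i)) \<partial>(PiM {..<N} (\<lambda>_. M))) = (\<Prod>i<N. char M v)"
    unfolding char_def by (rule product_integral_prod) (auto intro: integrable_iexp)
  ultimately show ?thesis
    using assms by simp
qed

lemma decreasing_increments_fejer_transform_power:
  assumes "real_distribution M" and "\<And>v. char M v = complex_of_real (\<integral>x. cos (v * x) \<partial>M)"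
  shows "decreasing_increments (fejer_transform (\<lambda>v. (\<integral>x. cos (v * x) \<partial>M) ^ N))"
proof -
  interpret real_distribution M by fact
  interpret product_prob_space "\<lambda>_::nat. M" "{..<N}"
    by (simp add: product_prob_space_def product_prob_space_axioms_def product_sigma_finite_def
        sigma_finite_measure_axioms prob_space_axioms)
  have "decreasing_increments (fejer_transform (\<lambda>v. \<integral>\<omega>. cos (v * (\<Sum>i<N. \<omega> i)) \<partial>(PiM {..<N} (\<lambda>_. M))))"
    by (rule decreasing_increments_fejer_transform_cos_expectation) (simp_all add: P.prob_space_axioms)
  then show ?thesis
    using integral_cos_sum_iid[OF assms(2)] by simp
qed

section \<open>The characteristic function exp(-2 c v^alpha) as a limit\<close>

lemma tendsto_power_exp_neg:
  fixes x :: "nat \<Rightarrow> real"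
  assumes bounded: "\<forall>\<^sub>F n in sequentially. \<bar>x n\<bar> \<le> 1"
    and lim: "(\<lambda>n. real n * (1 - x n)) \<longlonglongrightarrow> L"
  shows "(\<lambda>n. x n ^ n) \<longlonglongrightarrow> exp (- L)"
proof -
  have "0 \<le> L"
    using bounded by (intro tendsto_lowerbound[OF lim]) (auto elim!: eventually_mono)
  obtain N :: nat where "L \<le> real N"
    using real_arch_simple by blast
  have "(\<lambda>n. x n ^ n - (1 + - L / real n) ^ n) \<longlonglongrightarrow> 0"
  proof (rule Lim_null_comparison)
    show "(\<lambda>n. \<bar>real n * (1 - x n) - L\<bar>) \<longlonglongrightarrow> 0"
      using tendsto_rabs_zero[OF LIM_zero[OF lim]] .
    show "\<forall>\<^sub>F n in sequentially. norm (x n ^ n - (1 + - L / real n) ^ n) \<le> \<bar>real n * (1 - x n) - L\<bar>"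
      using bounded eventually_ge_at_top[of "Suc N"]
    proof eventually_elim
      case (elim n)
      then have n: "0 < real n" "L \<le> real n"
        using \<open>L \<le> real N\<close> by auto
      have "norm (1 + - L / real n) \<le> 1"
        using n \<open>0 \<le> L\<close> by (auto simp: abs_le_iff field_simps)
      then have "norm (x n ^ n - (1 + - L / real n) ^ n) \<le> real n * norm (x n - (1 + - L / real n))"
        using elim by (intro norm_power_diff) auto
      also have "\<dots> = \<bar>real n * (x n - (1 + - L / real n))\<bar>"
        using n by (simp add: abs_mult)
      also have "real n * (x n - (1 + - L / real n)) = - (real n * (1 - x n) - L)"
        using n by (simp add: field_simps)
      finally show ?case
        by simp
    qed
  qed
  then show ?thesis
    by (rule Lim_transform[OF tendsto_exp_limit_sequentially[of "- L"]])
qed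

lemma tendsto_integral_truncated_levy:
  fixes \<epsilon> :: "nat \<Rightarrow> real"
  assumes "0 < \<alpha>" "\<alpha> < 2" and "0 < v" and "\<epsilon> \<longlonglongrightarrow> 0"
  shows "(\<lambda>n. \<integral>x. (1 - cos (v * x)) * \<bar>x\<bar> powr (-1 - \<alpha>) * indicator {\<epsilon> n..} \<bar>x\<bar> \<partial>lborel)
    \<longlonglongrightarrow> v powr \<alpha> * (\<integral>x. levy_integrand \<alpha> x \<partial>lborel)"
  unfolding levy_integrand_scaled(2)[OF assms(1-3), symmetric]
proof (rule integral_dominated_convergence[where w = "\<lambda>x. (1 - cos (v * x)) * \<bar>x\<bar> powr (-1 - \<alpha>)"])
  show "integrable lborel (\<lambda>x. (1 - cos (v * x)) * \<bar>x\<bar> powr (-1 - \<alpha>))"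
    by (rule levy_integrand_scaled(1)[OF assms(1-3)])
  show "AE x in lborel. (\<lambda>n. (1 - cos (v * x)) * \<bar>x\<bar> powr (-1 - \<alpha>) * indicator {\<epsilon> n..} \<bar>x\<bar>)
      \<longlonglongrightarrow> (1 - cos (v * x)) * \<bar>x\<bar> powr (-1 - \<alpha>)"
  proof (rule AE_I2)
    fix x :: real
    show "(\<lambda>n. (1 - cos (v * x)) * \<bar>x\<bar> powr (-1 - \<alpha>) * indicator {\<epsilon> n..} \<bar>x\<bar>)
        \<longlonglongrightarrow> (1 - cos (v * x)) * \<bar>x\<bar> powr (-1 - \<alpha>)"
    proof (cases "x = 0")
      case False
      then have "\<forall>\<^sub>F n in sequentially. \<epsilon> n < \<bar>x\<bar>"
        by (intro order_tendstoD(2)[OF assms(4)]) simp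
      then show ?thesis
        by (rule tendsto_eventually[OF eventually_mono]) simp
    qed simp
  qed
  show "AE x in lborel. norm ((1 - cos (v * x)) * \<bar>x\<bar> powr (-1 - \<alpha>) * indicator {\<epsilon> n..} \<bar>x\<bar>)
      \<le> (1 - cos (v * x)) * \<bar>x\<bar> powr (-1 - \<alpha>)" for n
    by (rule AE_I2) (auto simp: indicator_def abs_mult)
qed measurable

text \<open>The scale at which the sum of n independent copies of sym_pareto alpha approximates the
  symmetric stable law with characteristic function exp(-2 c |v|^alpha), see pareto_scale_powr.\<close>

definition pareto_scale :: "real \<Rightarrow> real \<Rightarrow> nat \<Rightarrow> real" where
  "pareto_scale \<alpha> c n = (4 * c / (\<alpha> * (\<integral>x. levy_integrand \<alpha> x \<partial>lborel)) / real n) powr (1 / \<alpha>)"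

context
  fixes \<alpha> c :: real
  assumes \<alpha>: "0 < \<alpha>" "\<alpha> < 2" and c: "0 < c"
begin

lemma pareto_scale_pos: "0 < n \<Longrightarrow> 0 < pareto_scale \<alpha> c n"
  using integral_levy_integrand_pos[OF \<alpha>] \<alpha> c by (simp add: pareto_scale_def)

lemma pareto_scale_powr:
  assumes "0 < n"
  shows "real n * (\<alpha> / 2 * pareto_scale \<alpha> c n powr \<alpha>) * (\<integral>x. levy_integrand \<alpha> x \<partial>lborel) = 2 * c"
  using integral_levy_integrand_pos[OF \<alpha>] \<alpha> c assms
  by (simp add: pareto_scale_def powr_powr)

lemma pareto_scale_LIMSEQ_0: "pareto_scale \<alpha> c \<longlonglongrightarrow> 0"
  unfolding pareto_scale_def using \<alpha> integral_levy_integrand_pos[OF \<alpha>] c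
  by (intro tendsto_zero_powrI[where b = "1 / \<alpha>"] lim_const_over_n tendsto_const) auto

lemma n_one_minus_integral_cos_sym_pareto:
  assumes "0 \<le> v"
  shows "(\<lambda>n. real n * (1 - (\<integral>x. cos (v * x) \<partial>sym_pareto \<alpha> (pareto_scale \<alpha> c n)))) \<longlonglongrightarrow> 2 * c * v powr \<alpha>"
proof (cases "v = 0")
  case True
  have "\<forall>\<^sub>F n in sequentially. real n * (1 - (\<integral>x. cos (v * x) \<partial>sym_pareto \<alpha> (pareto_scale \<alpha> c n))) = 0"
    using eventually_gt_at_top[of 0]
  proof eventually_elim
    case (elim n)
    then interpret real_distribution "sym_pareto \<alpha> (pareto_scale \<alpha> c n)"
      by (intro real_distribution_sym_pareto \<alpha> pareto_scale_pos)
    show ?case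
      using True prob_space by simp
  qed
  then show ?thesis
    using True \<alpha> by (simp add: tendsto_eventually)
next
  case False
  with assms have "0 < v" by simp
  define IL where "IL = (\<integral>x. levy_integrand \<alpha> x \<partial>lborel)"
  define J where "J n = (\<integral>x. (1 - cos (v * x)) * \<bar>x\<bar> powr (-1 - \<alpha>) * indicator {pareto_scale \<alpha> c n..} \<bar>x\<bar> \<partial>lborel)"
    for n
  have "(\<lambda>n. 2 * c / IL * J n) \<longlonglongrightarrow> 2 * c / IL * (v powr \<alpha> * IL)"
    unfolding J_def IL_def
    by (intro tendsto_mult tendsto_const tendsto_integral_truncated_levy \<alpha> \<open>0 < v\<close> pareto_scale_LIMSEQ_0)
  moreover have "2 * c / IL * (v powr \<alpha> * IL) = 2 * c * v powr \<alpha>"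
    using integral_levy_integrand_pos[OF \<alpha>] by (simp add: IL_def)
  moreover have "\<forall>\<^sub>F n in sequentially.
      2 * c / IL * J n = real n * (1 - (\<integral>x. cos (v * x) \<partial>sym_pareto \<alpha> (pareto_scale \<alpha> c n)))"
    using eventually_gt_at_top[of 0]
  proof eventually_elim
    case (elim n)
    have "real n * (1 - (\<integral>x. cos (v * x) \<partial>sym_pareto \<alpha> (pareto_scale \<alpha> c n)))
        = real n * (\<alpha> / 2 * pareto_scale \<alpha> c n powr \<alpha>) * J n"
      unfolding one_minus_integral_cos_sym_pareto[OF \<alpha>(1) pareto_scale_pos[OF elim]] J_def by simp
    also have "real n * (\<alpha> / 2 * pareto_scale \<alpha> c n powr \<alpha>) = 2 * c / IL"
      using pareto_scale_powr[OF elim] integral_levy_integrand_pos[OF \<alpha>]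
      by (simp add: IL_def field_simps)
    finally show ?case ..
  qed
  ultimately show ?thesis
    by (auto intro: Lim_transform_eventually)
qed

lemma decreasing_increments_fejer_transform_stable:
  "decreasing_increments (fejer_transform (\<lambda>v. exp (- 2 * c * v powr \<alpha>)))"
proof -
  \<comment> \<open>Shifted to Suc n: pareto_scale alpha c 0 = 0 makes sym_pareto the zero measure.\<close>
  let ?\<phi> = "\<lambda>n v. (\<integral>x. cos (v * x) \<partial>sym_pareto \<alpha> (pareto_scale \<alpha> c n)) ^ n"
  have pareto: "real_distribution (sym_pareto \<alpha> (pareto_scale \<alpha> c (Suc n)))" for n
    by (intro real_distribution_sym_pareto \<alpha> pareto_scale_pos) simp
  show ?thesis
  proof (rule decreasing_increments_fejer_transform_LIMSEQ[where \<phi>s = "\<lambda>n. ?\<phi> (Suc n)"])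
    show "decreasing_increments (fejer_transform (?\<phi> (Suc n)))" for n
      by (intro decreasing_increments_fejer_transform_power pareto char_sym_pareto \<alpha> pareto_scale_pos) simp
    show "\<bar>?\<phi> (Suc n) v\<bar> \<le> 1" for n v
      unfolding power_abs using real_distribution.abs_integral_cos_le_1[OF pareto] by (intro power_le_one) auto
    show "(\<lambda>n. ?\<phi> (Suc n) v) \<longlonglongrightarrow> exp (- 2 * c * v powr \<alpha>)" if "0 \<le> v" for v
    proof -
      have "\<forall>\<^sub>F n in sequentially. \<bar>\<integral>x. cos (v * x) \<partial>sym_pareto \<alpha> (pareto_scale \<alpha> c n)\<bar> \<le> 1"
        using eventually_gt_at_top[of 0]
        by eventually_elim (intro real_distribution.abs_integral_cos_le_1 real_distribution_sym_pareto
            \<alpha> pareto_scale_pos)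
      then have "(\<lambda>n. ?\<phi> n v) \<longlonglongrightarrow> exp (- (2 * c * v powr \<alpha>))"
        by (rule tendsto_power_exp_neg[OF _ n_one_minus_integral_cos_sym_pareto[OF that]])
      then have "(\<lambda>n. ?\<phi> (Suc n) v) \<longlonglongrightarrow> exp (- (2 * c * v powr \<alpha>))"
        by (rule LIMSEQ_Suc)
      then show ?thesis
        by simp
    qed
  qed (use \<alpha> in measurable)
qed

end

lemma decreasing_increments_fejer_transform_gaussian:
  assumes "0 < c"
  shows "decreasing_increments (fejer_transform (\<lambda>v. exp (- 2 * c * v powr 2)))"
proof -
  interpret std_normal: real_distribution std_normal_distribution
    by (rule real_dist_normal_dist)
  define k where "k = 2 * sqrt c"
  have cos_expectation: "(\<integral>\<omega>. cos (v * (k * \<omega>)) \<partial>std_normal_distribution) = exp (- 2 * c * v powr 2)"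
    if "0 \<le> v" for v
  proof -
    have "integrable std_normal_distribution (\<lambda>x. iexp ((v * k) * x))"
      by (rule std_normal.integrable_iexp) auto
    then have "Re (char std_normal_distribution (v * k)) = (\<integral>\<omega>. Re (iexp ((v * k) * \<omega>)) \<partial>std_normal_distribution)"
      by (simp add: char_def)
    then have "(\<integral>\<omega>. cos (v * (k * \<omega>)) \<partial>std_normal_distribution) = Re (char std_normal_distribution (v * k))"
      by (simp add: Re_exp mult.assoc)
    also have "\<dots> = exp (- (v * k)\<^sup>2 / 2)"
      by (simp add: char_std_normal_distribution)
    finally show ?thesis
      using assms that by (simp add: k_def power_mult_distrib)
  qed
  have "decreasing_increments (fejer_transform (\<lambda>v. \<integral>\<omega>. cos (v * (k * \<omega>)) \<partial>std_normal_distribution))"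
    by (rule decreasing_increments_fejer_transform_cos_expectation) (simp_all add: std_normal.prob_space_axioms)
  moreover have "fejer_transform (\<lambda>v. \<integral>\<omega>. cos (v * (k * \<omega>)) \<partial>std_normal_distribution) s
      = fejer_transform (\<lambda>v. exp (- 2 * c * v powr 2)) s" if "0 \<le> s" for s
    using cos_expectation that by (rule fejer_transform_cong)
  ultimately show ?thesis
    by (rule decreasing_increments_cong[rotated])
qed

lemma decreasing_increments_fejer_transform_exp_powr:
  assumes "0 < \<alpha>" "\<alpha> \<le> 2" "0 < c"
  shows "decreasing_increments (fejer_transform (\<lambda>v. exp (- 2 * c * v powr \<alpha>)))"
proof (cases "\<alpha> = 2")
  case True
  then show ?thesis
    using decreasing_increments_fejer_transform_gaussian[OF assms(3)] by simp
next
  case False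
  then show ?thesis
    using assms decreasing_increments_fejer_transform_stable by simp
qed

section \<open>The variance function f and the covariance of increments\<close>

lemma f_fun_eq_fejer_transform:
  assumes "0 \<le> c" and "0 \<le> s"
  shows "f_fun \<alpha> c a s = 4 / (a * pi) * fejer_transform (\<lambda>v. exp (- 2 * c * v powr \<alpha>)) s"
proof (cases "s = 0")
  case True
  then show ?thesis
    by (simp add: f_fun_def fejer_transform_def)
next
  case False
  define g where "g u = (sin (u / 2))\<^sup>2 / u\<^sup>2 * (1 - exp (- 2 * c * (u / s) powr \<alpha>))" for u
  have indicator_g: "indicator {0..} u *\<^sub>R g u = fejer_kernel u * (1 - exp (- 2 * c * (u / s) powr \<alpha>))" for u
    by (cases "0 < u") (auto simp: g_def fejer_kernel_def indicator_def)
  have "integrable lborel (\<lambda>u. fejer_kernel u * (1 - exp (- 2 * c * (u / s) powr \<alpha>)))"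
  proof (rule Bochner_Integration.integrable_bound[OF integrable_fejer_kernel])
    show "AE u in lborel. norm (fejer_kernel u * (1 - exp (- 2 * c * (u / s) powr \<alpha>))) \<le> norm (fejer_kernel u)"
    proof (rule AE_I2)
      fix u :: real
      have "0 \<le> 2 * c * (u / s) powr \<alpha>"
        using assms by simp
      then have "\<bar>1 - exp (- 2 * c * (u / s) powr \<alpha>)\<bar> \<le> 1"
        by simp
      then show "norm (fejer_kernel u * (1 - exp (- 2 * c * (u / s) powr \<alpha>))) \<le> norm (fejer_kernel u)"
        using fejer_kernel_nonneg[of u] by (simp add: abs_mult mult_left_le)
    qed
  qed measurable
  then have "set_integrable lborel {0..} g"
    unfolding set_integrable_def indicator_g .
  then have "integral {0..} g = (LINT u:{0..}|lborel. g u)"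
    by (simp add: set_borel_integral_eq_integral(2))
  also have "\<dots> = (\<integral>u. fejer_kernel u * (1 - exp (- 2 * c * (u / s) powr \<alpha>)) \<partial>lborel)"
    unfolding set_lebesgue_integral_def indicator_g ..
  finally show ?thesis
    unfolding f_fun_def fejer_transform_def g_def[symmetric] using False by simp
qed

lemma decreasing_increments_f_fun:
  assumes "0 < \<alpha>" "\<alpha> \<le> 2" "0 < c" "0 \<le> a"
  shows "decreasing_increments (f_fun \<alpha> c a)"
proof -
  have "decreasing_increments (\<lambda>s. 4 / (a * pi) * fejer_transform (\<lambda>v. exp (- 2 * c * v powr \<alpha>)) s)"
    using assms by (intro decreasing_increments_cmult decreasing_increments_fejer_transform_exp_powr) auto
  then show ?thesis
    by (rule decreasing_increments_cong[rotated]) (use assms(3) in \<open>simp add: f_fun_eq_fejer_transform\<close>)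
qed

lemma integrable_mult_of_square_integrable:
  fixes X Y :: "'a \<Rightarrow> real"
  assumes [measurable]: "X \<in> borel_measurable M" "Y \<in> borel_measurable M"
    and "integrable M (\<lambda>x. (X x)\<^sup>2)" "integrable M (\<lambda>x. (Y x)\<^sup>2)"
  shows "integrable M (\<lambda>x. X x * Y x)"
proof (rule Bochner_Integration.integrable_bound)
  show "integrable M (\<lambda>x. (X x)\<^sup>2 + (Y x)\<^sup>2)"
    using assms(3,4) by (rule Bochner_Integration.integrable_add)
  show "AE x in M. norm (X x * Y x) \<le> norm ((X x)\<^sup>2 + (Y x)\<^sup>2)"
  proof (rule AE_I2)
    fix x
    have "2 * (\<bar>X x\<bar> * \<bar>Y x\<bar>) \<le> (X x)\<^sup>2 + (Y x)\<^sup>2"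
      using sum_squares_bound[of "\<bar>X x\<bar>" "\<bar>Y x\<bar>"] by simp
    moreover have "0 \<le> \<bar>X x\<bar> * \<bar>Y x\<bar>"
      by simp
    ultimately have "\<bar>X x\<bar> * \<bar>Y x\<bar> \<le> (X x)\<^sup>2 + (Y x)\<^sup>2"
      by linarith
    then show "norm (X x * Y x) \<le> norm ((X x)\<^sup>2 + (Y x)\<^sup>2)"
      by (simp add: abs_mult abs_of_nonneg)
  qed
qed measurable

context
  fixes M :: "'a measure" and G :: "real \<Rightarrow> 'a \<Rightarrow> real" and F :: "real \<Rightarrow> real"
  assumes prob: "prob_space M"
    and moments: "\<forall>t\<ge>0. G t \<in> borel_measurable M \<and> integrable M (\<lambda>x. (G t x)\<^sup>2) \<and> integral\<^sup>L M (G t) = 0"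
    and cov: "\<And>s r. 0 \<le> s \<Longrightarrow> 0 \<le> r \<Longrightarrow> covar M (G s) (G r) = (F s + F r - F \<bar>s - r\<bar>) / 2"
begin

lemma covar_increments:
  assumes "0 \<le> p" "0 \<le> q" "0 \<le> p'" "0 \<le> q'"
  shows "covar M (\<lambda>x. G p x - G q x) (\<lambda>x. G p' x - G q' x)
    = (F \<bar>p - q'\<bar> + F \<bar>q - p'\<bar> - F \<bar>p - p'\<bar> - F \<bar>q - q'\<bar>) / 2"
proof -
  interpret prob_space M by (fact prob)
  have integrable_G: "integrable M (G t)" if "0 \<le> t" for t
    using moments that by (blast intro: square_integrable_imp_integrable)
  have integrable_GG: "integrable M (\<lambda>x. G s x * G t x)" if "0 \<le> s" "0 \<le> t" for s t
    using moments that by (intro integrable_mult_of_square_integrable) auto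
  have expectation_GG: "(\<integral>x. G s x * G t x \<partial>M) = (F s + F t - F \<bar>s - t\<bar>) / 2" if "0 \<le> s" "0 \<le> t" for s t
    using cov[OF that] moments that by (simp add: covar_def)
  have "(\<lambda>x. (G p x - G q x) * (G p' x - G q' x))
      = (\<lambda>x. G p x * G p' x - G p x * G q' x - G q x * G p' x + G q x * G q' x)"
    by (simp add: fun_eq_iff algebra_simps)
  then have "covar M (\<lambda>x. G p x - G q x) (\<lambda>x. G p' x - G q' x)
      = (\<integral>x. G p x * G p' x - G p x * G q' x - G q x * G p' x + G q x * G q' x \<partial>M)"
    using moments integrable_G assms by (simp add: covar_def)
  also have "\<dots> = (\<integral>x. G p x * G p' x \<partial>M) - (\<integral>x. G p x * G q' x \<partial>M)
      - (\<integral>x. G q x * G p' x \<partial>M) + (\<integral>x. G q x * G q' x \<partial>M)"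
    using assms by (simp add: integrable_GG Bochner_Integration.integral_add Bochner_Integration.integral_diff)
  also have "\<dots> = (F \<bar>p - q'\<bar> + F \<bar>q - p'\<bar> - F \<bar>p - p'\<bar> - F \<bar>q - q'\<bar>) / 2"
    using assms by (simp add: expectation_GG field_simps abs_minus_commute)
  finally show ?thesis .
qed

lemma variance_increment:
  assumes "F 0 = 0" and "0 \<le> s" "0 \<le> r"
  shows "prob_space.variance M (\<lambda>x. G s x - G r x) = F \<bar>s - r\<bar>"
  using covar_increments[of s r s r] assms by (simp add: covar_def power2_eq_square abs_minus_commute)

lemma covar_increments_shift:
  assumes "0 \<le> h" "0 \<le> s" "0 \<le> r"
  shows "covar M (\<lambda>x. G (s + h) x - G h x) (\<lambda>x. G (r + h) x - G h x)
    = covar M (\<lambda>x. G s x - G 0 x) (\<lambda>x. G r x - G 0 x)"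
  using covar_increments[of "s + h" h "r + h" h] covar_increments[of s 0 r 0] assms by simp

lemma covar_disjoint_increments_nonpos:
  assumes "decreasing_increments F" and "0 \<le> s" "0 \<le> r" "0 \<le> u"
  shows "covar M (\<lambda>x. G s x - G 0 x) (\<lambda>x. G (r + s + u) x - G (s + u) x) \<le> 0"
proof -
  have distances: "\<bar>s - (s + u)\<bar> = u" "\<bar>0 - (r + s + u)\<bar> = r + s + u"
    "\<bar>s - (r + s + u)\<bar> = r + u" "\<bar>0 - (s + u)\<bar> = s + u"
    using assms by auto
  have "covar M (\<lambda>x. G s x - G 0 x) (\<lambda>x. G (r + s + u) x - G (s + u) x)
      = (F u + F (r + s + u) - F (r + u) - F (s + u)) / 2"
    using covar_increments[of s 0 "r + s + u" "s + u"] assms unfolding distances by simp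
  also have "\<dots> \<le> 0"
    using decreasing_incrementsD[OF assms(1,3,2,4)] by simp
  finally show ?thesis .
qed

end

theorem proposition3p13:
  fixes M :: "'w measure" and G :: "real \<Rightarrow> 'w \<Rightarrow> real" and \<alpha> c a :: real
  assumes "prob_space M"
    and "0 < \<alpha>" and "\<alpha> \<le> 2" and "0 < c" and "0 < a"
    and "centered_gaussian_process M G"
    and "\<And>s r. 0 \<le> s \<Longrightarrow> 0 \<le> r \<Longrightarrow> covar M (G s) (G r) = G_cov \<alpha> c a s r"
  shows "(\<forall>s\<ge>0. \<forall>r\<ge>0. prob_space.variance M (\<lambda>x. G s x - G r x) = f_fun \<alpha> c a \<bar>s - r\<bar>)
    \<and> (\<forall>h\<ge>0. \<forall>s\<ge>0. \<forall>r\<ge>0.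
         covar M (\<lambda>x. G (s + h) x - G h x) (\<lambda>x. G (r + h) x - G h x)
       = covar M (\<lambda>x. G s x - G 0 x) (\<lambda>x. G r x - G 0 x))
    \<and> (\<forall>s\<ge>0. \<forall>r\<ge>0. \<forall>u\<ge>0.
         covar M (\<lambda>x. G s x - G 0 x) (\<lambda>x. G (r + s + u) x - G (s + u) x) \<le> 0)"
proof -
  have moments: "\<forall>t\<ge>0. G t \<in> borel_measurable M \<and> integrable M (\<lambda>x. (G t x)\<^sup>2) \<and> integral\<^sup>L M (G t) = 0"
    using assms(6) by (simp add: centered_gaussian_process_def)
  have cov: "covar M (G s) (G r) = (f_fun \<alpha> c a s + f_fun \<alpha> c a r - f_fun \<alpha> c a \<bar>s - r\<bar>) / 2"
    if "0 \<le> s" "0 \<le> r" for s r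
    using assms(7)[OF that] by (simp add: G_cov_def)
  have "f_fun \<alpha> c a 0 = 0"
    by (simp add: f_fun_def)
  moreover have "decreasing_increments (f_fun \<alpha> c a)"
    using assms(2-5) by (intro decreasing_increments_f_fun) auto
  ultimately show ?thesis
    using variance_increment[OF assms(1) moments cov] covar_increments_shift[OF assms(1) moments cov]
      covar_disjoint_increments_nonpos[OF assms(1) moments cov]
    by blast
qed

end
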